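(* Let $n\geq 3$ be an integer and put $m=2^{n-1}$. Let $G_2(n)=\{0,1,\dots,2^n-1\}$ with the binary operation $\oplus$, and let $\mathrm{gyr}\colon G_2(n)\times G_2(n)\to \mathrm{Aut}(G_2(n),\oplus)$ be the map, all as defined in the context below. Then $(G_2(n),\oplus)$ is a gyrogroup with gyroautomorphisms given by $\mathrm{gyr}$; that is, $0\oplus x=x$ for all $x$, every element has a left inverse with respect to $0$, $a\oplus(b\oplus c)=(a\oplus b)\oplus \mathrm{gyr}[a,b](c)$ for all $a,b,c\in G_2(n)$, and $\mathrm{gyr}[a,b]=\mathrm{gyr}[a\oplus b,b]$ for all $a,b\in G_2(n)$.
   Context: A groupoid $(G,\oplus)$ is a gyrogroup if: (G1) there is $0\in G$ with $0\oplus x=x$ for all $x$; (G2) for each $a\in G$ there is $b\in G$ with $b\oplus a=0$; (G3) there is a function $\mathrm{gyr}\colon G\times G\to\mathrm{Aut}(G,\oplus)$ (automorphisms = bijections preserving $\oplus$) such that $a\oplus(b\oplus c)=(a\oplus b)\oplus\mathrm{gyr}[a,b](c)$ for all $a,b,c$; (G4) $\mathrm{gyr}[a,b]=\mathrm{gyr}[a\oplus b,b]$ for all $a,b$. Setup: $n\ge 3$, $m=2^{n-1}$, $G_2(n)=\{0,1,\dots,2^n-1\}$, $P(n)=\{0,\dots,m-1\}$, $H(n)=\{m,\dots,2^n-1\}$; $O_P,E_P$ are the odd/even elements of $P(n)$, $O_H,E_H$ the odd/even elements of $H(n)$. For $i,j\in G_2(n)$ let $t,s\in P(n)$ with $t\equiv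 i+j\pmod m$, $s\equiv i+j+\frac m2\pmod m$, and set $i\oplus j=t$ if $(i,j)\in (P(n)\times P(n))\cup\big[(H(n)\times H(n))\setminus(E_H\times O_H)\big]$; $i\oplus j=t+m$ if $(i,j)\in (P(n)\times H(n))\cup\big[(H(n)\times P(n))\setminus(E_H\times O_P)\big]$; $i\oplus j=s$ if $(i,j)\in E_H\times O_H$; $i\oplus j=s+m$ if $(i,j)\in E_H\times O_P$. Let $A\colon G_2(n)\to G_2(n)$ be $A(i)=r$ if $i\in O_P$, $A(i)=r+m$ if $i\in O_H$, $A(i)=i$ otherwise, where $r\in P(n)$, $r\equiv i+\frac m2\pmod m$ ($A$ is an automorphism of $(G_2(n),\oplus)$). Let $M=[O_P\times(O_H\cup E_H)]\cup[O_H\times(O_P\cup E_H)]\cup[E_H\times(O_P\cup O_H)]$, and define $\mathrm{gyr}[a,b]=A$ if $(a,b)\in M$ and $\mathrm{gyr}[a,b]=I$ (the identity map) otherwise. *)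

theory Defs
  imports Main
begin

definition groupoid_aut :: "'a set \<Rightarrow> ('a \<Rightarrow> 'a \<Rightarrow> 'a) \<Rightarrow> ('a \<Rightarrow> 'a) \<Rightarrow> bool" where
  "groupoid_aut G op f \<longleftrightarrow> bij_betw f G G \<and> (\<forall>x\<in>G. \<forall>y\<in>G. f (op x y) = op (f x) (f y))"

definition is_gyrogroup ::
  "'a set \<Rightarrow> ('a \<Rightarrow> 'a \<Rightarrow> 'a) \<Rightarrow> 'a \<Rightarrow> ('a \<Rightarrow> 'a \<Rightarrow> 'a \<Rightarrow> 'a) \<Rightarrow> bool" where
  "is_gyrogroup G op e gyr \<longleftrightarrow>
     (\<forall>x\<in>G. \<forall>y\<in>G. op x y \<in> G) \<and>
     e \<in> G \<and> (\<forall>x\<in>G. op e x = x) \<and>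
     (\<forall>a\<in>G. \<exists>b\<in>G. op b a = e) \<and>
     (\<forall>a\<in>G. \<forall>b\<in>G. groupoid_aut G op (gyr a b)) \<and>
     (\<forall>a\<in>G. \<forall>b\<in>G. \<forall>c\<in>G. op a (op b c) = op (op a b) (gyr a b c)) \<and>
     (\<forall>a\<in>G. \<forall>b\<in>G. \<forall>c\<in>G. gyr a b c = gyr (op a b) b c)"

definition mG :: "nat \<Rightarrow> nat" where "mG n = 2 ^ (n - 1)"

definition G2 :: "nat \<Rightarrow> nat set" where "G2 n = {0..<2 ^ n}"
definition P :: "nat \<Rightarrow> nat set" where "P n = {0..<mG n}"
definition H :: "nat \<Rightarrow> nat set" where "H n = {mG n..<2 ^ n}"

definition OP :: "nat \<Rightarrow> nat set" where "OP n = {i \<in> P n. odd i}"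
definition EP :: "nat \<Rightarrow> nat set" where "EP n = {i \<in> P n. even i}"
definition OH :: "nat \<Rightarrow> nat set" where "OH n = {i \<in> H n. odd i}"
definition EH :: "nat \<Rightarrow> nat set" where "EH n = {i \<in> H n. even i}"

definition oplusG :: "nat \<Rightarrow> nat \<Rightarrow> nat \<Rightarrow> nat" where
  "oplusG n i j =
     (let m = mG n; t = (i + j) mod m; s = (i + j + m div 2) mod m in
      if (i, j) \<in> EH n \<times> OH n then s
      else if (i, j) \<in> EH n \<times> OP n then s + m
      else if (i, j) \<in> (P n \<times> P n) \<union> (H n \<times> H n) then t
      else t + m)"

definition autA :: "nat \<Rightarrow> nat \<Rightarrow> nat" where
  "autA n i =
     (let m = mG n; r = (i + m div 2) mod m in
      if i \<in> OP n then r else if i \<in> OH n then r + m else i)"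

definition Mset :: "nat \<Rightarrow> (nat \<times> nat) set" where
  "Mset n = (OP n \<times> (OH n \<union> EH n)) \<union> (OH n \<times> (OP n \<union> EH n)) \<union> (EH n \<times> (OP n \<union> OH n))"

definition gyrG :: "nat \<Rightarrow> nat \<Rightarrow> nat \<Rightarrow> nat \<Rightarrow> nat" where
  "gyrG n a b = (if (a, b) \<in> Mset n then autA n else id)"

end

(* Write an element of {0..<2m} as pack m h r, where h says whether it lies in the upper
   half H(n) and r is its residue mod m; since m is even, its parity is the parity of r.
   In these coordinates x \<oplus> y XORs the half bits and adds the residues mod m, plus a
   correction m/2 exactly when x \<in> E_H and y is odd, and A adds m/2 to odd residues.
   Because 4 divides m, m/2 is even, so parities add under \<oplus> and A, and m/2-corrections
   only matter through their number mod 2.  Every gyrogroup law then reduces to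
   associativity of XOR on the half bits plus a finite parity count over the halves and
   parities of the arguments. *)

theory Submission
  imports Defs "HOL-Number_Theory.Cong"
begin

definition pack :: "nat \<Rightarrow> bool \<Rightarrow> nat \<Rightarrow> nat" where
  "pack m h r = (if h then m else 0) + r mod m"

definition gyroplus :: "nat \<Rightarrow> nat \<Rightarrow> nat \<Rightarrow> nat" where
  "gyroplus m x y =
     pack m ((m \<le> x) \<noteq> (m \<le> y)) (x + y + of_bool (m \<le> x \<and> even x \<and> odd y) * (m div 2))"

definition gyroaut :: "nat \<Rightarrow> nat \<Rightarrow> nat" where
  "gyroaut m x = pack m (m \<le> x) (x + of_bool (odd x) * (m div 2))"

definition gyroneg :: "nat \<Rightarrow> nat \<Rightarrow> nat" where
  "gyroneg m x = pack m (m \<le> x) (m - x mod m)"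

text \<open>The set M of the paper, with membership in H(n) read as m \<le> x.\<close>
definition twisted :: "nat \<Rightarrow> nat \<Rightarrow> nat \<Rightarrow> bool" where
  "twisted m a b \<longleftrightarrow>
     (\<not> m \<le> a \<and> odd a \<and> m \<le> b) \<or>
     (m \<le> a \<and> odd a \<and> (\<not> m \<le> b \<and> odd b \<or> m \<le> b \<and> even b)) \<or>
     (m \<le> a \<and> even a \<and> odd b)"

definition gyration :: "nat \<Rightarrow> nat \<Rightarrow> nat \<Rightarrow> nat \<Rightarrow> nat" where
  "gyration m a b = (if twisted m a b then gyroaut m else id)"

locale gyro_modulus =
  fixes m :: nat
  assumes four_dvd: "4 dvd m" and pos: "0 < m"
begin

lemma even_modulus: "even m"
  using four_dvd by (metis dvd_trans even_numeral)

lemma even_half: "even (m div 2)"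
  using four_dvd by auto

lemma pack_lt [simp]: "pack m h r < 2 * m"
  using pos mod_less_divisor[OF pos, of r] by (simp add: pack_def)

lemma pack_upper [simp]: "m \<le> pack m h r \<longleftrightarrow> h"
  using mod_less_divisor[OF pos, of r] by (simp add: pack_def)

lemma pack_cong: "[pack m h r = r] (mod m)"
  by (simp add: pack_def cong_def)

lemma even_pack [simp]: "even (pack m h r) \<longleftrightarrow> even r"
  using even_modulus by (simp add: pack_def dvd_mod_iff)

lemma pack_eq_iff: "pack m h r = pack m h' r' \<longleftrightarrow> h = h' \<and> [r = r'] (mod m)"
proof
  assume "pack m h r = pack m h' r'"
  then show "h = h' \<and> [r = r'] (mod m)"
    by (metis pack_upper pack_cong cong_def)
qed (simp add: pack_def cong_def)

lemma pack_self: "x < 2 * m \<Longrightarrow> pack m (m \<le> x) x = x"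
  by (simp add: pack_def le_mod_geq)

lemma cong_add_half:
  assumes "k mod 2 = k' mod 2"
  shows "[s + k * (m div 2) = s + k' * (m div 2)] (mod m)"
proof -
  have half: "m = 2 * (m div 2)"
    using even_modulus by simp
  have "[k * (m div 2) = k' * (m div 2)] (mod m)"
    unfolding cong_def by (subst (1 2) half) (simp add: mod_mult_mult2 assms mult.commute[of _ "m div 2"])
  then show ?thesis
    by (simp add: cong_add)
qed

lemma gyroplus_lt [simp]: "gyroplus m x y < 2 * m"
  by (simp add: gyroplus_def)

lemma gyroplus_upper [simp]: "m \<le> gyroplus m x y \<longleftrightarrow> (m \<le> x) \<noteq> (m \<le> y)"
  by (simp add: gyroplus_def)

lemma even_gyroplus [simp]: "even (gyroplus m x y) \<longleftrightarrow> even (x + y)"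
  using even_half by (simp add: gyroplus_def)

lemma gyroplus_cong:
  "[gyroplus m x y = x + y + of_bool (m \<le> x \<and> even x \<and> odd y) * (m div 2)] (mod m)"
  unfolding gyroplus_def by (rule pack_cong)

lemma gyroaut_lt [simp]: "gyroaut m x < 2 * m"
  by (simp add: gyroaut_def)

lemma gyroaut_upper [simp]: "m \<le> gyroaut m x \<longleftrightarrow> m \<le> x"
  by (simp add: gyroaut_def)

lemma even_gyroaut [simp]: "even (gyroaut m x) \<longleftrightarrow> even x"
  using even_half by (simp add: gyroaut_def)

lemma gyroaut_cong: "[gyroaut m x = x + of_bool (odd x) * (m div 2)] (mod m)"
  unfolding gyroaut_def by (rule pack_cong)

lemma gyration_upper [simp]: "m \<le> gyration m a b c \<longleftrightarrow> m \<le> c"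
  by (simp add: gyration_def)

lemma even_gyration [simp]: "even (gyration m a b c) \<longleftrightarrow> even c"
  by (simp add: gyration_def)

lemma gyration_cong: "[gyration m a b c = c + of_bool (twisted m a b \<and> odd c) * (m div 2)] (mod m)"
  by (simp add: gyration_def gyroaut_cong)

lemma gyroplus_left_gyroassoc:
  "gyroplus m a (gyroplus m b c) = gyroplus m (gyroplus m a b) (gyration m a b c)"
proof -
  define k1 :: nat where "k1 = of_bool (m \<le> a \<and> even a \<and> odd (b + c))"
  define k2 :: nat where "k2 = of_bool (m \<le> b \<and> even b \<and> odd c)"
  define k3 :: nat where "k3 = of_bool ((m \<le> a) \<noteq> (m \<le> b) \<and> even (a + b) \<and> odd c)"
  define k4 :: nat where "k4 = of_bool (m \<le> a \<and> even a \<and> odd b)"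
  define k5 :: nat where "k5 = of_bool (twisted m a b \<and> odd c)"
  have parity: "(k1 + k2) mod 2 = (k3 + k4 + k5) mod 2"
    unfolding k1_def k2_def k3_def k4_def k5_def twisted_def
    by (cases "m \<le> a"; cases "m \<le> b"; cases "even a"; cases "even b"; cases "even c") simp_all
  have "[a + gyroplus m b c + k1 * (m div 2) = a + (b + c + k2 * (m div 2)) + k1 * (m div 2)] (mod m)"
    unfolding k2_def by (intro cong_add cong_refl gyroplus_cong)
  also have "a + (b + c + k2 * (m div 2)) + k1 * (m div 2) = a + b + c + (k1 + k2) * (m div 2)"
    by (simp add: algebra_simps)
  also have "[\<dots> = a + b + c + (k3 + k4 + k5) * (m div 2)] (mod m)"
    using parity by (rule cong_add_half)
  also have "a + b + c + (k3 + k4 + k5) * (m div 2)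
      = (a + b + k4 * (m div 2)) + (c + k5 * (m div 2)) + k3 * (m div 2)"
    by (simp add: algebra_simps)
  also have "[\<dots> = gyroplus m a b + gyration m a b c + k3 * (m div 2)] (mod m)"
    unfolding k4_def k5_def by (intro cong_add cong_refl cong_sym[OF gyroplus_cong] cong_sym[OF gyration_cong])
  finally have "[a + gyroplus m b c + k1 * (m div 2)
      = gyroplus m a b + gyration m a b c + k3 * (m div 2)] (mod m)" .
  then show ?thesis
    unfolding gyroplus_def[of m a "gyroplus m b c"] gyroplus_def[of m "gyroplus m a b"] pack_eq_iff
    by (auto simp: k1_def k3_def)
qed

lemma gyration_left_loop: "gyration m a b = gyration m (gyroplus m a b) b"
  unfolding gyration_def twisted_def
  by (cases "m \<le> a"; cases "m \<le> b"; cases "even a"; cases "even b") simp_all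

lemma gyroplus_left_zero: "x < 2 * m \<Longrightarrow> gyroplus m 0 x = x"
  using pos by (simp add: gyroplus_def pack_self)

lemma gyroneg_left_inverse: "gyroplus m (gyroneg m x) x = 0"
proof -
  have even_neg: "even (gyroneg m x) \<longleftrightarrow> even x"
    using even_modulus mod_less_divisor[OF pos, of x] by (simp add: gyroneg_def dvd_mod_iff)
  have "[gyroneg m x + x = (m - x mod m) + x mod m] (mod m)"
    unfolding gyroneg_def by (intro cong_add pack_cong) (simp add: cong_def)
  also have "(m - x mod m) + x mod m = m"
    using mod_less_divisor[OF pos, of x] by simp
  finally have "[gyroneg m x + x = 0] (mod m)"
    by (simp add: cong_def)
  then have "gyroplus m (gyroneg m x) x = pack m False 0"
    unfolding gyroplus_def pack_eq_iff using even_neg by (simp add: gyroneg_def)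
  then show ?thesis
    by (simp add: pack_def)
qed

lemma gyroaut_involution: "x < 2 * m \<Longrightarrow> gyroaut m (gyroaut m x) = x"
proof -
  assume x: "x < 2 * m"
  have "[gyroaut m x + of_bool (odd x) * (m div 2)
      = (x + of_bool (odd x) * (m div 2)) + of_bool (odd x) * (m div 2)] (mod m)"
    by (intro cong_add cong_refl gyroaut_cong)
  also have "(x + of_bool (odd x) * (m div 2)) + of_bool (odd x) * (m div 2)
      = x + (of_bool (odd x) + of_bool (odd x)) * (m div 2)"
    by (simp add: algebra_simps)
  also have "[\<dots> = x + 0 * (m div 2)] (mod m)"
    by (rule cong_add_half) simp
  finally show ?thesis
    by (subst (2) pack_self[OF x, symmetric]) (simp add: gyroaut_def[of m "gyroaut m x"] pack_eq_iff)
qed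

lemma gyroaut_gyroplus: "gyroaut m (gyroplus m x y) = gyroplus m (gyroaut m x) (gyroaut m y)"
proof -
  define k :: nat where "k = of_bool (m \<le> x \<and> even x \<and> odd y)"
  have parity: "(k + of_bool (odd (x + y))) mod 2 = (k + of_bool (odd x) + of_bool (odd y)) mod 2"
    by (cases "even x"; cases "even y") simp_all
  have "[gyroplus m x y + of_bool (odd (x + y)) * (m div 2)
      = (x + y + k * (m div 2)) + of_bool (odd (x + y)) * (m div 2)] (mod m)"
    unfolding k_def by (intro cong_add cong_refl gyroplus_cong)
  also have "(x + y + k * (m div 2)) + of_bool (odd (x + y)) * (m div 2)
      = x + y + (k + of_bool (odd (x + y))) * (m div 2)"
    by (simp add: algebra_simps)
  also have "[\<dots> = x + y + (k + of_bool (odd x) + of_bool (odd y)) * (m div 2)] (mod m)"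
    using parity by (rule cong_add_half)
  also have "x + y + (k + of_bool (odd x) + of_bool (odd y)) * (m div 2)
      = (x + of_bool (odd x) * (m div 2)) + (y + of_bool (odd y) * (m div 2)) + k * (m div 2)"
    by (simp add: algebra_simps)
  also have "[\<dots> = gyroaut m x + gyroaut m y + k * (m div 2)] (mod m)"
    by (intro cong_add cong_refl cong_sym[OF gyroaut_cong])
  finally show ?thesis
    unfolding gyroaut_def[of m "gyroplus m x y"] gyroplus_def[of m "gyroaut m x"] pack_eq_iff
    by (simp add: k_def)
qed

lemma gyroaut_groupoid_aut: "groupoid_aut {0..<2 * m} (gyroplus m) (gyroaut m)"
  unfolding groupoid_aut_def
proof
  show "bij_betw (gyroaut m) {0..<2 * m} {0..<2 * m}"
    by (rule bij_betw_byWitness[where f' = "gyroaut m"])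
      (auto simp: gyroaut_involution)
qed (simp add: gyroaut_gyroplus)

lemma gyration_groupoid_aut: "groupoid_aut {0..<2 * m} (gyroplus m) (gyration m a b)"
  using gyroaut_groupoid_aut by (simp add: gyration_def groupoid_aut_def)

theorem is_gyrogroup_gyroplus: "is_gyrogroup {0..<2 * m} (gyroplus m) 0 (gyration m)"
proof -
  have "\<exists>y\<in>{0..<2 * m}. gyroplus m y x = 0" for x
    using gyroneg_left_inverse[of x] by (auto simp: gyroneg_def)
  then show ?thesis
    unfolding is_gyrogroup_def
    using pos gyroplus_left_zero gyration_groupoid_aut gyroplus_left_gyroassoc gyration_left_loop
    by auto
qed

end

lemma groupoid_aut_cong:
  assumes "groupoid_aut G op' f'"
    and "\<And>x y. x \<in> G \<Longrightarrow> y \<in> G \<Longrightarrow> op' x y \<in> G"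
    and "\<And>x y. x \<in> G \<Longrightarrow> y \<in> G \<Longrightarrow> op x y = op' x y"
    and "\<And>x. x \<in> G \<Longrightarrow> f x = f' x"
  shows "groupoid_aut G op f"
proof -
  have bij: "bij_betw f G G"
    using assms(1,4) bij_betw_cong unfolding groupoid_aut_def by blast
  then have "f x \<in> G" if "x \<in> G" for x
    using that bij_betwE by blast
  with bij assms show ?thesis
    unfolding groupoid_aut_def by auto
qed

lemma is_gyrogroup_cong:
  assumes gyro: "is_gyrogroup G op' e gyr'"
    and op_eq: "\<And>x y. x \<in> G \<Longrightarrow> y \<in> G \<Longrightarrow> op x y = op' x y"
    and gyr_eq: "\<And>a b c. a \<in> G \<Longrightarrow> b \<in> G \<Longrightarrow> c \<in> G \<Longrightarrow> gyr a b c = gyr' a b c"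
  shows "is_gyrogroup G op e gyr"
proof -
  note facts = gyro[unfolded is_gyrogroup_def]
  have closed: "op' x y \<in> G" if "x \<in> G" "y \<in> G" for x y
    using facts that by blast
  have gyr_closed: "gyr' a b c \<in> G" if "a \<in> G" "b \<in> G" "c \<in> G" for a b c
    using facts that unfolding groupoid_aut_def by (meson bij_betwE)
  have op_closed: "op x y \<in> G" if "x \<in> G" "y \<in> G" for x y
    using that closed op_eq by simp
  have left_zero: "op e x = x" if "x \<in> G" for x
    using facts that op_eq by simp
  have inverse: "\<exists>b\<in>G. op b a = e" if "a \<in> G" for a
    using facts that op_eq by metis
  have aut: "groupoid_aut G op (gyr a b)" if "a \<in> G" "b \<in> G" for a b
  proof (rule groupoid_aut_cong[of G op' "gyr' a b"])
    show "groupoid_aut G op' (gyr' a b)"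
      using facts that by blast
  qed (use that closed op_eq gyr_eq in auto)
  have assoc: "op a (op b c) = op (op a b) (gyr a b c)" if "a \<in> G" "b \<in> G" "c \<in> G" for a b c
    using facts that closed gyr_closed by (simp add: op_eq gyr_eq)
  have loop: "gyr a b c = gyr (op a b) b c" if "a \<in> G" "b \<in> G" "c \<in> G" for a b c
    using facts that closed by (simp add: op_eq gyr_eq)
  show ?thesis
    unfolding is_gyrogroup_def
    using facts by (intro conjI ballI op_closed left_zero inverse aut assoc loop) auto
qed

lemma gyro_modulus_mG:
  assumes "n \<ge> 3"
  shows "gyro_modulus (mG n)"
proof -
  have "(2::nat) ^ 2 dvd 2 ^ (n - 1)"
    using assms by (intro le_imp_power_dvd) simp
  then show ?thesis
    unfolding gyro_modulus_def mG_def by simp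
qed

lemma two_mG: "n \<ge> 1 \<Longrightarrow> 2 * mG n = 2 ^ n"
  unfolding mG_def by (cases n) simp_all

lemma oplusG_eq_gyroplus:
  assumes "n \<ge> 1" and "x \<in> G2 n" and "y \<in> G2 n"
  shows "oplusG n x y = gyroplus (mG n) x y"
  using assms two_mG[OF assms(1)]
  unfolding oplusG_def gyroplus_def pack_def EH_def OH_def OP_def P_def H_def G2_def Let_def
  by (cases "mG n \<le> x"; cases "mG n \<le> y"; cases "even x"; cases "even y") auto

lemma autA_eq_gyroaut:
  assumes "n \<ge> 1" and "x \<in> G2 n"
  shows "autA n x = gyroaut (mG n) x"
  using assms two_mG[OF assms(1)]
  unfolding autA_def gyroaut_def pack_def OH_def OP_def P_def H_def G2_def Let_def
  by (cases "mG n \<le> x"; cases "even x") (auto simp: le_mod_geq)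

lemma gyrG_eq_gyration:
  assumes "n \<ge> 1" and "a \<in> G2 n" and "b \<in> G2 n" and "c \<in> G2 n"
  shows "gyrG n a b c = gyration (mG n) a b c"
  using assms two_mG[OF assms(1)] autA_eq_gyroaut[OF assms(1,4)]
  unfolding gyrG_def gyration_def twisted_def Mset_def EH_def OH_def OP_def P_def H_def G2_def
  by (cases "mG n \<le> a"; cases "mG n \<le> b"; cases "even a"; cases "even b") auto

theorem mainTheorem2:
  fixes n :: nat
  assumes "n \<ge> 3"
  shows "is_gyrogroup (G2 n) (oplusG n) 0 (gyrG n)"
proof -
  interpret gyro_modulus "mG n"
    using assms by (rule gyro_modulus_mG)
  have n: "n \<ge> 1"
    using assms by simp
  have "is_gyrogroup (G2 n) (gyroplus (mG n)) 0 (gyration (mG n))"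
    using is_gyrogroup_gyroplus unfolding G2_def two_mG[OF n, symmetric] .
  then show ?thesis
    by (rule is_gyrogroup_cong) (simp_all only: oplusG_eq_gyroplus[OF n] gyrG_eq_gyration[OF n])
qed

end
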